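(* Let $\lambda_1,\ldots,\lambda_L>0$ and consider the convex program $$\min_{\{\hat\lambda_\ell,\gamma_\ell\}}\ \frac12\sum_{\ell=1}^L\log\frac{\lambda_\ell}{\gamma_\ell}\ \text{ s.t. } 0<\gamma_\ell\le\lambda_\ell,\ 0\le\hat\lambda_\ell,\ \sum_{\ell}D_\ell(\gamma_\ell,\hat\lambda_\ell)\le D,\ \sum_\ell P_\ell(\hat\lambda_\ell)\le P,$$ with $D_\ell(\gamma_\ell,\hat\lambda_\ell)=\lambda_\ell-2\sqrt{\hat\lambda_\ell(\lambda_\ell-\gamma_\ell)}+\hat\lambda_\ell$ and $P_\ell(\hat\lambda_\ell)=(\sqrt{\lambda_\ell}-\sqrt{\hat\lambda_\ell})^2$. Let $(D,P)$ be strictly feasible. Then the optimal solution $\{\gamma^*_\ell(D,P),\hat\lambda^*_\ell(D,P)\}$ is as follows: (1) If both the distortion and perception constraints are active, then there exist $\nu_1,\nu_2>0$ such that, for every $\ell$, $$\gamma^*_\ell(D,P)=\frac{\theta_\ell}{2\nu_1},\qquad \hat\lambda^*_\ell(D,P)=\frac{\lambda_\ell}{\big(1+\frac{(1-\theta_\ell)\nu_1}{\nu_2}\big)^2},$$ where $\theta_\ell$ is the unique solution of $\frac{\theta_\ell}{1+\frac{(1-\theta_\ell)\nu_1}{\nu_2}}=\sqrt{1-\frac{\theta_\ell}{2\nu_1\lambda_\ell}}$, and $\nu_1,\nu_2$ are such that $\sum_\ell D_\ell(\gamma^*_\ell(D,P),\hat\lambda^*_\ell(D,P))=D$ and $\sum_\ell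 P_\ell(\hat\lambda^*_\ell(D,P))=P$. In this case every component has positive rate, i.e., $\gamma^*_\ell(D,P)<\lambda_\ell$ for all $\ell$. (2) If the distortion constraint is active but the perception constraint is inactive, then there exists $\nu_1>0$ with $\sum_{\ell}[\lambda_\ell-\frac{1}{2\nu_1}]^+=[\sum_\ell\lambda_\ell-D]^+$ such that $\gamma^*_\ell(D,P)=\min\{\frac{1}{2\nu_1},\lambda_\ell\}$ and $\hat\lambda^*_\ell(D,P)=\lambda_\ell-\min\{\frac{1}{2\nu_1},\lambda_\ell\}$. (3) If the distortion constraint is inactive, then $\gamma^*_\ell(D,P)=\lambda_\ell$ for all $\ell$ (every component has zero rate), and $(\hat\lambda^*_\ell(D,P))_\ell$ can be any vector in the set $\{(\hat\lambda_\ell)_\ell:\ \sum_\ell P_\ell(\hat\lambda_\ell)\le P,\ \sum_\ell(\lambda_\ell+\hat\lambda_\ell)\le D,\ \hat\lambda_\ell\ge0\}$.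
   Context: This program equals the rate-distortion-perception function of an $L$-dimensional zero-mean Gaussian vector source with covariance eigenvalues $\lambda_\ell$, squared-error distortion and squared Wasserstein-2 perception loss; the rate of component $\ell$ is $\frac12\log\frac{\lambda_\ell}{\gamma_\ell}$. $[x]^+=\max\{0,x\}$; logs are natural. $(D,P)$ strictly feasible means there is a feasible point satisfying the distortion and perception constraints with strict inequality. A constraint is inactive if the program with that constraint removed (all others kept) has at least one optimal solution satisfying all the original constraints; otherwise it is active. *)

theory Defs
  imports Complex_Main
begin

text \<open>Components are indexed by a finite (nonempty) type 'n, standing for {1..L}.
  A candidate point of the program is a pair (g, lh) of functions 'n => real,
  g l = gamma_l and lh l = hat-lambda_l.\<close>

definition Dl :: "real \<Rightarrow> real \<Rightarrow> real \<Rightarrow> real" where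
  "Dl lam g lh = lam - 2 * sqrt (lh * (lam - g)) + lh"

definition Pl :: "real \<Rightarrow> real \<Rightarrow> real" where
  "Pl lam lh = (sqrt lam - sqrt lh)\<^sup>2"

definition rate_obj :: "('n::finite \<Rightarrow> real) \<Rightarrow> ('n \<Rightarrow> real) \<Rightarrow> real" where
  "rate_obj lam g = (1/2) * (\<Sum>l\<in>UNIV. ln (lam l / g l))"

definition totD :: "('n::finite \<Rightarrow> real) \<Rightarrow> ('n \<Rightarrow> real) \<Rightarrow> ('n \<Rightarrow> real) \<Rightarrow> real" where
  "totD lam g lh = (\<Sum>l\<in>UNIV. Dl (lam l) (g l) (lh l))"

definition totP :: "('n::finite \<Rightarrow> real) \<Rightarrow> ('n \<Rightarrow> real) \<Rightarrow> real" where
  "totP lam lh = (\<Sum>l\<in>UNIV. Pl (lam l) (lh l))"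

definition box_ok :: "('n::finite \<Rightarrow> real) \<Rightarrow> ('n \<Rightarrow> real) \<Rightarrow> ('n \<Rightarrow> real) \<Rightarrow> bool" where
  "box_ok lam g lh \<longleftrightarrow> (\<forall>l. 0 < g l \<and> g l \<le> lam l \<and> 0 \<le> lh l)"

definition feasible :: "('n::finite \<Rightarrow> real) \<Rightarrow> real \<Rightarrow> real \<Rightarrow> ('n \<Rightarrow> real) \<Rightarrow> ('n \<Rightarrow> real) \<Rightarrow> bool" where
  "feasible lam D P g lh \<longleftrightarrow> box_ok lam g lh \<and> totD lam g lh \<le> D \<and> totP lam lh \<le> P"

definition strictly_feasible :: "('n::finite \<Rightarrow> real) \<Rightarrow> real \<Rightarrow> real \<Rightarrow> bool" where
  "strictly_feasible lam D P \<longleftrightarrow>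
     (\<exists>g lh. box_ok lam g lh \<and> totD lam g lh < D \<and> totP lam lh < P)"

definition optimal :: "('n::finite \<Rightarrow> real) \<Rightarrow> real \<Rightarrow> real \<Rightarrow> ('n \<Rightarrow> real) \<Rightarrow> ('n \<Rightarrow> real) \<Rightarrow> bool" where
  "optimal lam D P g lh \<longleftrightarrow> feasible lam D P g lh \<and>
     (\<forall>g' lh'. feasible lam D P g' lh' \<longrightarrow> rate_obj lam g \<le> rate_obj lam g')"

definition feasible_noD :: "('n::finite \<Rightarrow> real) \<Rightarrow> real \<Rightarrow> ('n \<Rightarrow> real) \<Rightarrow> ('n \<Rightarrow> real) \<Rightarrow> bool" where
  "feasible_noD lam P g lh \<longleftrightarrow> box_ok lam g lh \<and> totP lam lh \<le> P"

definition optimal_noD :: "('n::finite \<Rightarrow> real) \<Rightarrow> real \<Rightarrow> ('n \<Rightarrow> real) \<Rightarrow> ('n \<Rightarrow> real) \<Rightarrow> bool" where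
  "optimal_noD lam P g lh \<longleftrightarrow> feasible_noD lam P g lh \<and>
     (\<forall>g' lh'. feasible_noD lam P g' lh' \<longrightarrow> rate_obj lam g \<le> rate_obj lam g')"

definition feasible_noP :: "('n::finite \<Rightarrow> real) \<Rightarrow> real \<Rightarrow> ('n \<Rightarrow> real) \<Rightarrow> ('n \<Rightarrow> real) \<Rightarrow> bool" where
  "feasible_noP lam D g lh \<longleftrightarrow> box_ok lam g lh \<and> totD lam g lh \<le> D"

definition optimal_noP :: "('n::finite \<Rightarrow> real) \<Rightarrow> real \<Rightarrow> ('n \<Rightarrow> real) \<Rightarrow> ('n \<Rightarrow> real) \<Rightarrow> bool" where
  "optimal_noP lam D g lh \<longleftrightarrow> feasible_noP lam D g lh \<and>
     (\<forall>g' lh'. feasible_noP lam D g' lh' \<longrightarrow> rate_obj lam g \<le> rate_obj lam g')"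

text \<open>A constraint is inactive if the program with that constraint removed has an optimal
  solution satisfying all the original constraints; otherwise it is active.\<close>
definition D_inactive :: "('n::finite \<Rightarrow> real) \<Rightarrow> real \<Rightarrow> real \<Rightarrow> bool" where
  "D_inactive lam D P \<longleftrightarrow> (\<exists>g lh. optimal_noD lam P g lh \<and> feasible lam D P g lh)"

definition P_inactive :: "('n::finite \<Rightarrow> real) \<Rightarrow> real \<Rightarrow> real \<Rightarrow> bool" where
  "P_inactive lam D P \<longleftrightarrow> (\<exists>g lh. optimal_noP lam D g lh \<and> feasible lam D P g lh)"

text \<open>The defining equation of theta_l, on the natural domain where the square root
  argument is nonnegative and the denominator is nonzero.\<close>
definition theta_eq :: "real \<Rightarrow> real \<Rightarrow> real \<Rightarrow> real \<Rightarrow> bool" where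
  "theta_eq nu1 nu2 lam \<theta> \<longleftrightarrow>
     \<theta> \<le> 2 * nu1 * lam \<and> 1 + (1 - \<theta>) * nu1 / nu2 \<noteq> 0 \<and>
     \<theta> / (1 + (1 - \<theta>) * nu1 / nu2) = sqrt (1 - \<theta> / (2 * nu1 * lam))"

definition pos_part :: "real \<Rightarrow> real" where
  "pos_part x = max 0 x"

end

(* The program is convex: D_l is jointly convex in (gamma, hat-lambda) because the geometric mean
   sqrt (x y) is concave, P_l is convex and -log is convex. With Slater's condition, an optimal point
   therefore minimises the Lagrangian  rate + nu1 (totD - D) + nu2 (totP - P)  over the box, with
   complementary slackness. If a multiplier vanished, the optimum would also solve the program
   without that constraint, i.e. the constraint would be inactive; so active constraints have
   positive multipliers.

   The Lagrangian is a sum of one term per component, and each term is minimised separately.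
   When the perception constraint is inactive, the optimum also solves the program without it,
   whose components are minimised at hat-lambda = lambda - gamma and gamma = min (1/(2 nu1), lambda):
   reverse water-filling. When both multipliers are positive, write b = sqrt (lambda - gamma) and
   a = sqrt hat-lambda: the term is a quadratic in a, and the remaining function of b has negative
   slope at b = 0, so its minimiser is an interior stationary point; the stationarity equation is
   the theta equation. When the distortion constraint is inactive the optimum has zero rate, which
   forces gamma = lambda. *)

theory Submission
  imports Defs "HOL-Analysis.Convex_Euclidean_Space"
begin

section \<open>Convexity of the program\<close>

lemma Dl_eq_square:
  assumes "0 \<le> lh" "g \<le> lam"
  shows "Dl lam g lh = g + (sqrt lh - sqrt (lam - g))\<^sup>2"
proof -
  have "sqrt (lh * (lam - g)) = sqrt lh * sqrt (lam - g)" by (simp add: real_sqrt_mult)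
  moreover have "(sqrt lh)\<^sup>2 = lh" "(sqrt (lam - g))\<^sup>2 = lam - g" using assms by auto
  ultimately show ?thesis unfolding Dl_def power2_diff by (simp add: algebra_simps)
qed

lemma Dl_complement: "g \<le> lam \<Longrightarrow> Dl lam g (lam - g) = g"
  using Dl_eq_square[of "lam - g" g lam] by simp

lemma Dl_self: "Dl lam lam lh = lam + lh"
  unfolding Dl_def by simp

lemma totD_self: "totD lam lam lh = (\<Sum>l\<in>UNIV. lam l + lh l)"
  unfolding totD_def Dl_self ..

lemma convex_comb_sqrt_mult_le:
  fixes x1 y1 x2 y2 a b :: real
  assumes "0 \<le> x1" "0 \<le> y1" "0 \<le> x2" "0 \<le> y2" "0 \<le> a" "0 \<le> b"
  shows "a * sqrt (x1 * y1) + b * sqrt (x2 * y2) \<le> sqrt ((a * x1 + b * x2) * (a * y1 + b * y2))"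
proof -
  have am_gm: "2 * (sqrt (x1 * y2) * sqrt (x2 * y1)) \<le> x1 * y2 + x2 * y1"
  proof -
    have "0 \<le> (sqrt (x1 * y2) - sqrt (x2 * y1))\<^sup>2" by simp
    moreover have "(sqrt (x1 * y2))\<^sup>2 = x1 * y2" "(sqrt (x2 * y1))\<^sup>2 = x2 * y1" using assms by auto
    ultimately show ?thesis unfolding power2_diff by linarith
  qed
  have swap: "sqrt (x1 * y1) * sqrt (x2 * y2) = sqrt (x1 * y2) * sqrt (x2 * y1)"
    by (simp add: real_sqrt_mult[symmetric] algebra_simps)
  have "(a * sqrt (x1 * y1) + b * sqrt (x2 * y2))\<^sup>2
        = a\<^sup>2 * (x1 * y1) + b\<^sup>2 * (x2 * y2) + 2 * a * b * (sqrt (x1 * y1) * sqrt (x2 * y2))"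
    using assms by (simp add: power2_sum power_mult_distrib)
  also have "\<dots> \<le> a\<^sup>2 * (x1 * y1) + b\<^sup>2 * (x2 * y2) + a * b * (x1 * y2 + x2 * y1)"
    using swap assms mult_left_mono[OF am_gm, of "a * b"] by (simp add: algebra_simps)
  also have "\<dots> = (a * x1 + b * x2) * (a * y1 + b * y2)" by (simp add: algebra_simps power2_eq_square)
  finally show ?thesis using assms by (simp add: real_le_rsqrt)
qed

lemma Dl_convex_comb:
  assumes "0 \<le> lh1" "0 \<le> lh2" "g1 \<le> lam" "g2 \<le> lam" "0 \<le> a" "0 \<le> b" "a + b = 1"
  shows "Dl lam (a * g1 + b * g2) (a * lh1 + b * lh2) \<le> a * Dl lam g1 lh1 + b * Dl lam g2 lh2"
proof -
  define S1 S2 where "S1 = sqrt (lh1 * (lam - g1))" and "S2 = sqrt (lh2 * (lam - g2))"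
  define S where "S = sqrt ((a * lh1 + b * lh2) * (lam - (a * g1 + b * g2)))"
  have b: "b = 1 - a" using \<open>a + b = 1\<close> by simp
  have "a * S1 + b * S2 \<le> sqrt ((a * lh1 + b * lh2) * (a * (lam - g1) + b * (lam - g2)))"
    unfolding S1_def S2_def by (rule convex_comb_sqrt_mult_le) (use assms in auto)
  also have "a * (lam - g1) + b * (lam - g2) = lam - (a * g1 + b * g2)"
    by (simp add: b algebra_simps)
  finally have "a * S1 + b * S2 \<le> S" unfolding S_def .
  moreover have "a * Dl lam g1 lh1 + b * Dl lam g2 lh2 = lam - 2 * (a * S1 + b * S2) + (a * lh1 + b * lh2)"
    unfolding Dl_def S1_def[symmetric] S2_def[symmetric] by (simp add: b algebra_simps)
  moreover have "Dl lam (a * g1 + b * g2) (a * lh1 + b * lh2) = lam - 2 * S + (a * lh1 + b * lh2)"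
    unfolding Dl_def S_def ..
  ultimately show ?thesis by simp
qed

lemma Pl_convex_comb:
  assumes "0 \<le> lh1" "0 \<le> lh2" "0 \<le> lam" "0 \<le> a" "0 \<le> b" "a + b = 1"
  shows "Pl lam (a * lh1 + b * lh2) \<le> a * Pl lam lh1 + b * Pl lam lh2"
proof -
  have expand: "Pl lam x = lam - 2 * sqrt lam * sqrt x + x" if "0 \<le> x" for x
    using that assms by (simp add: Pl_def power2_diff)
  have "a * sqrt (lh1 * 1) + b * sqrt (lh2 * 1) \<le> sqrt ((a * lh1 + b * lh2) * (a * 1 + b * 1))"
    by (rule convex_comb_sqrt_mult_le) (use assms in auto)
  then have "a * sqrt lh1 + b * sqrt lh2 \<le> sqrt (a * lh1 + b * lh2)" using assms by simp
  then have "sqrt lam * (a * sqrt lh1 + b * sqrt lh2) \<le> sqrt lam * sqrt (a * lh1 + b * lh2)"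
    by (rule mult_left_mono) (use assms in auto)
  moreover have "lam = a * lam + b * lam" using \<open>a + b = 1\<close> by (metis distrib_right mult_1)
  ultimately show ?thesis using assms by (simp add: expand algebra_simps)
qed

lemma convex_comb_pos:
  fixes a b x y :: real
  assumes "0 < x" "0 < y" "0 \<le> a" "0 \<le> b" "a + b = 1"
  shows "0 < a * x + b * y"
  using assms by (cases "a = 0") (auto intro: add_pos_nonneg)

lemma ln_ratio_convex_comb:
  fixes g1 g2 lam a b :: real
  assumes "0 < g1" "0 < g2" "0 < lam" "0 \<le> a" "0 \<le> b" "a + b = 1"
  shows "ln (lam / (a * g1 + b * g2)) \<le> a * ln (lam / g1) + b * ln (lam / g2)"
proof -
  have "a * ln g1 + b * ln g2 \<le> ln (a * g1 + b * g2)"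
    using ln_concave assms unfolding concave_on_iff by auto
  moreover have "ln lam = a * ln lam + b * ln lam" using \<open>a + b = 1\<close> by (metis distrib_right mult_1)
  ultimately show ?thesis using assms convex_comb_pos[OF assms(1,2,4-6)] by (simp add: ln_div algebra_simps)
qed

lemma box_ok_convex_comb:
  fixes lam g1 lh1 g2 lh2 :: "'n::finite \<Rightarrow> real"
  assumes lam: "\<forall>l. 0 < lam l" and box1: "box_ok lam g1 lh1" and box2: "box_ok lam g2 lh2"
    and ab: "0 \<le> a" "0 \<le> b" "a + b = 1"
  defines "g \<equiv> \<lambda>l. a * g1 l + b * g2 l" and "lh \<equiv> \<lambda>l. a * lh1 l + b * lh2 l"
  shows "box_ok lam g lh"
    and "totD lam g lh \<le> a * totD lam g1 lh1 + b * totD lam g2 lh2"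
    and "totP lam lh \<le> a * totP lam lh1 + b * totP lam lh2"
    and "rate_obj lam g \<le> a * rate_obj lam g1 + b * rate_obj lam g2"
proof -
  have h: "0 < g1 l" "g1 l \<le> lam l" "0 \<le> lh1 l" "0 < g2 l" "g2 l \<le> lam l" "0 \<le> lh2 l" for l
    using box1 box2 unfolding box_ok_def by auto
  have "a * g1 l + b * g2 l \<le> a * lam l + b * lam l" for l
    using h ab by (intro add_mono mult_left_mono) auto
  moreover have "a * lam l + b * lam l = lam l" for l using ab(3) by (metis distrib_right mult_1)
  ultimately show "box_ok lam g lh"
    unfolding box_ok_def g_def lh_def using h ab convex_comb_pos by auto
  show "totD lam g lh \<le> a * totD lam g1 lh1 + b * totD lam g2 lh2"
    unfolding totD_def g_def lh_def sum_distrib_left sum.distrib[symmetric]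
    by (rule sum_mono) (rule Dl_convex_comb, use h ab in auto)
  show "totP lam lh \<le> a * totP lam lh1 + b * totP lam lh2"
    unfolding totP_def lh_def sum_distrib_left sum.distrib[symmetric]
    by (rule sum_mono) (rule Pl_convex_comb, use h ab lam in \<open>auto intro: less_imp_le\<close>)
  have "(\<Sum>l\<in>UNIV. ln (lam l / g l))
          \<le> a * (\<Sum>l\<in>UNIV. ln (lam l / g1 l)) + b * (\<Sum>l\<in>UNIV. ln (lam l / g2 l))"
    unfolding g_def sum_distrib_left sum.distrib[symmetric]
    by (rule sum_mono) (rule ln_ratio_convex_comb, use h ab lam in auto)
  then show "rate_obj lam g \<le> a * rate_obj lam g1 + b * rate_obj lam g2"
    unfolding rate_obj_def by (simp add: algebra_simps)
qed

lemma rate_obj_nonneg: "box_ok lam g lh \<Longrightarrow> 0 \<le> rate_obj lam g"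
  unfolding rate_obj_def box_ok_def by (auto intro!: sum_nonneg ln_ge_zero)

lemma rate_obj_self: "rate_obj lam lam = 0"
proof -
  have "ln (x / x) = 0" for x :: real by (cases "x = 0") auto
  then show ?thesis unfolding rate_obj_def by simp
qed

lemma rate_obj_eq_0_imp_eq:
  assumes "\<forall>l. 0 < lam l" "box_ok lam g lh" "rate_obj lam g = 0"
  shows "g = lam"
proof
  fix l
  have "\<forall>l\<in>UNIV. 0 \<le> ln (lam l / g l)"
    using assms(2) unfolding box_ok_def by (auto intro!: ln_ge_zero)
  moreover have "(\<Sum>l\<in>UNIV. ln (lam l / g l)) = 0" using assms(3) unfolding rate_obj_def by simp
  ultimately have "ln (lam l / g l) = 0" by (simp add: sum_nonneg_eq_0_iff)
  moreover have "0 < g l" "0 < lam l" using assms(1,2) unfolding box_ok_def by auto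
  ultimately show "g l = lam l" by simp
qed

lemma totP_nonneg: "0 \<le> totP lam lh"
  unfolding totP_def Pl_def by (simp add: sum_nonneg)

section \<open>Lagrange multipliers\<close>

lemma nonneg_if_bounded_below_on_ray:
  fixes b x c :: real
  assumes "\<And>k. 0 \<le> k \<Longrightarrow> b \<le> x + c * k"
  shows "0 \<le> c"
proof (rule ccontr)
  assume "\<not> 0 \<le> c"
  then have "c < 0" by simp
  define k where "k = (\<bar>x - b\<bar> + 1) / - c"
  have "0 \<le> k" using \<open>c < 0\<close> unfolding k_def by (simp add: divide_nonneg_neg)
  moreover have "c * k = - (\<bar>x - b\<bar> + 1)" using \<open>c < 0\<close> unfolding k_def by simp
  ultimately show False using assms[of k] by linarith
qed

text \<open>Separate S from the open orthant below (0, 0, p); upward closedness of S makes the normal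
  nonnegative.\<close>

lemma convex_upward_closed_nonneg_normal:
  fixes S :: "(real \<times> real \<times> real) set"
  assumes "convex S"
    and upward: "\<And>u v t u' v' t'. (u, v, t) \<in> S \<Longrightarrow> u \<le> u' \<Longrightarrow> v \<le> v' \<Longrightarrow> t \<le> t' \<Longrightarrow> (u', v', t') \<in> S"
    and "(u0, v0, t0) \<in> S"
    and bound: "\<And>u v t. (u, v, t) \<in> S \<Longrightarrow> u < 0 \<Longrightarrow> v < 0 \<Longrightarrow> p \<le> t"
  shows "\<exists>a1 a2 a0. 0 \<le> a1 \<and> 0 \<le> a2 \<and> 0 \<le> a0 \<and> (a1, a2, a0) \<noteq> 0 \<and>
           (\<forall>(u, v, t) \<in> S. a0 * p \<le> a1 * u + a2 * v + a0 * t)"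
proof -
  define T :: "(real \<times> real \<times> real) set" where "T = {(u, v, t). u < 0 \<and> v < 0 \<and> t < p}"
  have "convex T"
    unfolding convex_def T_def by (auto intro!: convex_bound_lt)
  moreover have "(-1, -1, p - 1) \<in> T" unfolding T_def by simp
  moreover have "T \<inter> S = {}" unfolding T_def using bound by fastforce
  ultimately obtain a c where "a \<noteq> 0" and below: "\<forall>x\<in>T. inner a x \<le> c" and above: "\<forall>x\<in>S. c \<le> inner a x"
    using separating_hyperplane_sets[OF _ \<open>convex S\<close>] \<open>(u0, v0, t0) \<in> S\<close> by blast
  obtain a1 a2 a0 where a: "a = (a1, a2, a0)" by (cases a) auto
  have S_above: "c \<le> a1 * u + a2 * v + a0 * t" if "(u, v, t) \<in> S" for u v t
    using above that unfolding a by (auto simp: algebra_simps)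
  define c0 where "c0 = a1 * u0 + a2 * v0 + a0 * t0"
  note shifted = S_above[OF upward[OF \<open>(u0, v0, t0) \<in> S\<close>]]
  have "0 \<le> a1"
    by (rule nonneg_if_bounded_below_on_ray[of c c0])
      (use shifted[of "u0 + _" v0 t0] in \<open>auto simp: c0_def algebra_simps\<close>)
  moreover have "0 \<le> a2"
    by (rule nonneg_if_bounded_below_on_ray[of c c0])
      (use shifted[of u0 "v0 + _" t0] in \<open>auto simp: c0_def algebra_simps\<close>)
  moreover have "0 \<le> a0"
    by (rule nonneg_if_bounded_below_on_ray[of c c0])
      (use shifted[of u0 v0 "t0 + _"] in \<open>auto simp: c0_def algebra_simps\<close>)
  ultimately have a_nonneg: "0 \<le> a1" "0 \<le> a2" "0 \<le> a0" .
  have "a0 * p \<le> c"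
  proof (rule field_le_epsilon)
    fix e :: real assume "0 < e"
    define d where "d = e / (a1 + a2 + a0 + 1)"
    have "0 < d" using \<open>0 < e\<close> a_nonneg unfolding d_def by simp
    then have "(- d, - d, p - d) \<in> T" unfolding T_def by simp
    then have "a0 * p \<le> c + (a1 + a2 + a0) * d"
      using below unfolding a by (auto simp: algebra_simps)
    also have "(a1 + a2 + a0) * d \<le> e"
      using \<open>0 < e\<close> a_nonneg unfolding d_def by (simp add: field_simps)
    finally show "a0 * p \<le> c + e" by simp
  qed
  then have "\<forall>(u, v, t) \<in> S. a0 * p \<le> a1 * u + a2 * v + a0 * t"
    using S_above by fastforce
  then show ?thesis using a_nonneg \<open>a \<noteq> 0\<close> unfolding a by blast
qed

text \<open>Slater's point rules out a separating hyperplane with vanishing last coordinate.\<close>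

lemma convex_upward_closed_multipliers:
  fixes S :: "(real \<times> real \<times> real) set"
  assumes "convex S"
    and upward: "\<And>u v t u' v' t'. (u, v, t) \<in> S \<Longrightarrow> u \<le> u' \<Longrightarrow> v \<le> v' \<Longrightarrow> t \<le> t' \<Longrightarrow> (u', v', t') \<in> S"
    and slater: "(u0, v0, t0) \<in> S" "u0 < 0" "v0 < 0"
    and bound: "\<And>u v t. (u, v, t) \<in> S \<Longrightarrow> u < 0 \<Longrightarrow> v < 0 \<Longrightarrow> p \<le> t"
  shows "\<exists>n1 n2. 0 \<le> n1 \<and> 0 \<le> n2 \<and> (\<forall>(u, v, t) \<in> S. p \<le> t + n1 * u + n2 * v)"
proof -
  obtain a1 a2 a0 where a_nonneg: "0 \<le> a1" "0 \<le> a2" "0 \<le> a0" and "(a1, a2, a0) \<noteq> 0"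
    and S_bound: "\<forall>(u, v, t) \<in> S. a0 * p \<le> a1 * u + a2 * v + a0 * t"
    using convex_upward_closed_nonneg_normal[of S u0 v0 t0 p] assms by blast
  have "0 < a0"
  proof (rule ccontr)
    assume "\<not> 0 < a0"
    then have "a0 = 0" using a_nonneg by simp
    then have "0 \<le> a1 * u0 + a2 * v0" using S_bound slater(1) by auto
    moreover have "a1 * u0 \<le> 0" "a2 * v0 \<le> 0"
      using a_nonneg slater by (simp_all add: mult_nonneg_nonpos)
    ultimately have "a1 * u0 = 0" "a2 * v0 = 0" by linarith+
    then show False using slater \<open>a0 = 0\<close> \<open>(a1, a2, a0) \<noteq> 0\<close> by (simp add: zero_prod_def)
  qed
  have "p \<le> t + a1 / a0 * u + a2 / a0 * v" if "(u, v, t) \<in> S" for u v t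
  proof -
    have "a0 * (t + a1 / a0 * u + a2 / a0 * v) = a1 * u + a2 * v + a0 * t"
      using \<open>0 < a0\<close> by (simp add: field_simps)
    then have "a0 * p \<le> a0 * (t + a1 / a0 * u + a2 / a0 * v)" using S_bound that by auto
    then show ?thesis using \<open>0 < a0\<close> by simp
  qed
  then show ?thesis using a_nonneg \<open>0 < a0\<close> by (intro exI[of _ "a1 / a0"] exI[of _ "a2 / a0"]) auto
qed

lemma convexlike_imp_convex_value_set:
  fixes f h1 h2 :: "'a \<Rightarrow> real"
  assumes convexlike: "\<And>x y a b. x \<in> C \<Longrightarrow> y \<in> C \<Longrightarrow> 0 \<le> a \<Longrightarrow> 0 \<le> b \<Longrightarrow> a + b = 1 \<Longrightarrow>
      \<exists>z\<in>C. f z \<le> a * f x + b * f y \<and> h1 z \<le> a * h1 x + b * h1 y \<and> h2 z \<le> a * h2 x + b * h2 y"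
  shows "convex {(u, v, t). \<exists>y\<in>C. h1 y \<le> u \<and> h2 y \<le> v \<and> f y \<le> t}"
  unfolding convex_def
proof (intro ballI allI impI)
  let ?S = "{(u, v, t). \<exists>y\<in>C. h1 y \<le> u \<and> h2 y \<le> v \<and> f y \<le> t}"
  fix p q :: "real \<times> real \<times> real" and a b :: real
  assume "p \<in> ?S" "q \<in> ?S" and ab: "0 \<le> a" "0 \<le> b" "a + b = 1"
  obtain u1 v1 t1 y1 where p: "p = (u1, v1, t1)" and y1: "y1 \<in> C" "h1 y1 \<le> u1" "h2 y1 \<le> v1" "f y1 \<le> t1"
    using \<open>p \<in> ?S\<close> by auto
  obtain u2 v2 t2 y2 where q: "q = (u2, v2, t2)" and y2: "y2 \<in> C" "h1 y2 \<le> u2" "h2 y2 \<le> v2" "f y2 \<le> t2"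
    using \<open>q \<in> ?S\<close> by auto
  obtain z where "z \<in> C" and z: "f z \<le> a * f y1 + b * f y2" "h1 z \<le> a * h1 y1 + b * h1 y2"
      "h2 z \<le> a * h2 y1 + b * h2 y2"
    using convexlike[OF y1(1) y2(1) ab] by blast
  have "a * f y1 + b * f y2 \<le> a * t1 + b * t2" "a * h1 y1 + b * h1 y2 \<le> a * u1 + b * u2"
    "a * h2 y1 + b * h2 y2 \<le> a * v1 + b * v2"
    using y1 y2 ab by (intro add_mono mult_left_mono; simp)+
  then show "a *\<^sub>R p + b *\<^sub>R q \<in> ?S"
    unfolding p q using \<open>z \<in> C\<close> z by (auto intro!: bexI[of _ z])
qed

lemma convexlike_slater_multipliers:
  fixes f h1 h2 :: "'a \<Rightarrow> real"
  assumes convexlike: "\<And>x y a b. x \<in> C \<Longrightarrow> y \<in> C \<Longrightarrow> 0 \<le> a \<Longrightarrow> 0 \<le> b \<Longrightarrow> a + b = 1 \<Longrightarrow>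
      \<exists>z\<in>C. f z \<le> a * f x + b * f y \<and> h1 z \<le> a * h1 x + b * h1 y \<and> h2 z \<le> a * h2 x + b * h2 y"
    and slater: "x0 \<in> C" "h1 x0 < 0" "h2 x0 < 0"
    and feasible: "x \<in> C" "h1 x \<le> 0" "h2 x \<le> 0"
    and optimal: "\<And>y. y \<in> C \<Longrightarrow> h1 y \<le> 0 \<Longrightarrow> h2 y \<le> 0 \<Longrightarrow> f x \<le> f y"
  shows "\<exists>n1 n2. 0 \<le> n1 \<and> 0 \<le> n2 \<and> n1 * h1 x = 0 \<and> n2 * h2 x = 0 \<and>
           (\<forall>y\<in>C. f x \<le> f y + n1 * h1 y + n2 * h2 y)"
proof -
  define S where "S = {(u, v, t). \<exists>y\<in>C. h1 y \<le> u \<and> h2 y \<le> v \<and> f y \<le> t}"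
  have "convex S" unfolding S_def by (rule convexlike_imp_convex_value_set[OF convexlike])
  moreover have "(h1 x0, h2 x0, f x0) \<in> S" unfolding S_def using slater by auto
  moreover have "f x \<le> t" if "(u, v, t) \<in> S" "u < 0" "v < 0" for u v t
    using that optimal unfolding S_def by fastforce
  moreover have "(u', v', t') \<in> S" if "(u, v, t) \<in> S" "u \<le> u'" "v \<le> v'" "t \<le> t'" for u v t u' v' t'
    using that unfolding S_def by force
  ultimately obtain n1 n2 where n: "0 \<le> n1" "0 \<le> n2" and bound: "\<forall>(u, v, t)\<in>S. f x \<le> t + n1 * u + n2 * v"
    using convex_upward_closed_multipliers[of S "h1 x0" "h2 x0" "f x0" "f x"] slater by blast
  have lagrange: "f x \<le> f y + n1 * h1 y + n2 * h2 y" if "y \<in> C" for y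
  proof -
    have "(h1 y, h2 y, f y) \<in> S" unfolding S_def using that by auto
    then show ?thesis using bound by auto
  qed
  have "n1 * h1 x \<le> 0" "n2 * h2 x \<le> 0"
    using n feasible by (simp_all add: mult_nonneg_nonpos)
  then have "n1 * h1 x = 0 \<and> n2 * h2 x = 0" using lagrange[OF feasible(1)] by linarith
  then show ?thesis using n lagrange by blast
qed

lemma optimal_imp_multipliers:
  fixes lam g lh :: "'n::finite \<Rightarrow> real"
  assumes lam: "\<forall>l. 0 < lam l" and "strictly_feasible lam D P" and opt: "optimal lam D P g lh"
  shows "\<exists>n1 n2. 0 \<le> n1 \<and> 0 \<le> n2 \<and> n1 * (totD lam g lh - D) = 0 \<and> n2 * (totP lam lh - P) = 0 \<and>
    (\<forall>g' lh'. box_ok lam g' lh' \<longrightarrow>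
       rate_obj lam g \<le> rate_obj lam g' + n1 * (totD lam g' lh' - D) + n2 * (totP lam lh' - P))"
proof -
  define C where "C = {(g', lh'). box_ok lam g' lh'}"
  define f where "f = (\<lambda>(g' :: 'n \<Rightarrow> real, lh' :: 'n \<Rightarrow> real). rate_obj lam g')"
  define h1 where "h1 = (\<lambda>(g', lh'). totD lam g' lh' - D)"
  define h2 where "h2 = (\<lambda>(g' :: 'n \<Rightarrow> real, lh'). totP lam lh' - P)"
  have convexlike: "\<exists>z\<in>C. f z \<le> a * f x + b * f y \<and> h1 z \<le> a * h1 x + b * h1 y \<and> h2 z \<le> a * h2 x + b * h2 y"
    if xC: "x \<in> C" and yC: "y \<in> C" and ab: "0 \<le> a" "0 \<le> b" "a + b = 1" for x y a b
  proof -
    obtain g1 lh1 g2 lh2 where x: "x = (g1, lh1)" "box_ok lam g1 lh1" and y: "y = (g2, lh2)" "box_ok lam g2 lh2"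
      using xC yC unfolding C_def by auto
    have shift: "a * X + b * Y - c = a * (X - c) + b * (Y - c)" for X Y c :: real
      using ab(3) by (simp add: algebra_simps flip: distrib_right)
    note comb = box_ok_convex_comb[OF lam x(2) y(2) ab]
    show ?thesis
    proof (rule bexI[of _ "(\<lambda>l. a * g1 l + b * g2 l, \<lambda>l. a * lh1 l + b * lh2 l)"])
      show "(\<lambda>l. a * g1 l + b * g2 l, \<lambda>l. a * lh1 l + b * lh2 l) \<in> C"
        unfolding C_def using comb(1) by simp
    qed (use comb(2-4) in \<open>simp add: x y f_def h1_def h2_def flip: shift\<close>)
  qed
  obtain g0 lh0 where slater: "box_ok lam g0 lh0" "totD lam g0 lh0 < D" "totP lam lh0 < P"
    using \<open>strictly_feasible lam D P\<close> unfolding strictly_feasible_def by blast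
  have "f (g, lh) \<le> f y" if "y \<in> C" "h1 y \<le> 0" "h2 y \<le> 0" for y
  proof -
    obtain g' lh' where y: "y = (g', lh')" by (cases y)
    have "feasible lam D P g' lh'" using that unfolding y C_def h1_def h2_def feasible_def by simp
    then show ?thesis using opt unfolding y f_def optimal_def by simp blast
  qed
  moreover have "(g, lh) \<in> C" "h1 (g, lh) \<le> 0" "h2 (g, lh) \<le> 0"
    using opt unfolding C_def h1_def h2_def optimal_def feasible_def by simp_all
  moreover have "(g0, lh0) \<in> C" "h1 (g0, lh0) < 0" "h2 (g0, lh0) < 0"
    using slater unfolding C_def h1_def h2_def by simp_all
  ultimately obtain n1 n2 where "0 \<le> n1" "0 \<le> n2" "n1 * h1 (g, lh) = 0" "n2 * h2 (g, lh) = 0"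
      and lagrange: "\<forall>y\<in>C. f (g, lh) \<le> f y + n1 * h1 y + n2 * h2 y"
    using convexlike_slater_multipliers[of C f h1 h2 "(g0, lh0)" "(g, lh)", OF convexlike] by blast
  moreover have "rate_obj lam g \<le> rate_obj lam g' + n1 * (totD lam g' lh' - D) + n2 * (totP lam lh' - P)"
    if "box_ok lam g' lh'" for g' lh'
    using lagrange that unfolding C_def f_def h1_def h2_def by auto
  ultimately show ?thesis unfolding h1_def h2_def by auto
qed

text \<open>A perception budget exceeding the perception of both the optimum and a Slater point never
  binds, so its multiplier vanishes by complementary slackness.\<close>

lemma optimal_noP_imp_multiplier:
  fixes lam g lh :: "'n::finite \<Rightarrow> real"
  assumes lam: "\<forall>l. 0 < lam l" and "strictly_feasible lam D P" and opt: "optimal_noP lam D g lh"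
  shows "\<exists>n1. 0 \<le> n1 \<and> n1 * (totD lam g lh - D) = 0 \<and>
    (\<forall>g' lh'. box_ok lam g' lh' \<longrightarrow> rate_obj lam g \<le> rate_obj lam g' + n1 * (totD lam g' lh' - D))"
proof -
  obtain g0 lh0 where slater: "box_ok lam g0 lh0" "totD lam g0 lh0 < D"
    using \<open>strictly_feasible lam D P\<close> unfolding strictly_feasible_def by blast
  define P' where "P' = max (totP lam lh) (totP lam lh0) + 1"
  have "strictly_feasible lam D P'"
    unfolding strictly_feasible_def P'_def using slater by force
  moreover have "optimal lam D P' g lh"
    using opt unfolding optimal_def optimal_noP_def feasible_def feasible_noP_def P'_def by auto
  ultimately obtain n1 n2 where "0 \<le> n1" "n1 * (totD lam g lh - D) = 0" "n2 * (totP lam lh - P') = 0"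
      and "\<forall>g' lh'. box_ok lam g' lh' \<longrightarrow>
         rate_obj lam g \<le> rate_obj lam g' + n1 * (totD lam g' lh' - D) + n2 * (totP lam lh' - P')"
    using optimal_imp_multipliers[OF lam] by blast
  moreover have "n2 = 0"
    using \<open>n2 * (totP lam lh - P') = 0\<close> unfolding P'_def by auto
  ultimately show ?thesis by auto
qed

definition lagrangian_term :: "real \<Rightarrow> real \<Rightarrow> real \<Rightarrow> real \<Rightarrow> real \<Rightarrow> real" where
  "lagrangian_term lam n1 n2 x y = (1/2) * ln (lam / x) + n1 * Dl lam x y + n2 * Pl lam y"

lemma rate_obj_plus_penalties_eq:
  "rate_obj lam g + n1 * (totD lam g lh - D) + n2 * (totP lam lh - P)
     = (\<Sum>l\<in>UNIV. lagrangian_term (lam l) n1 n2 (g l) (lh l)) - n1 * D - n2 * P"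
  unfolding rate_obj_def totD_def totP_def lagrangian_term_def
  by (simp add: sum.distrib sum_distrib_left algebra_simps)

lemma sum_le_sum_fun_upd_imp:
  fixes F :: "'n::finite \<Rightarrow> 'a \<Rightarrow> 'b \<Rightarrow> real"
  assumes "(\<Sum>l\<in>UNIV. F l (g l) (h l)) \<le> (\<Sum>l\<in>UNIV. F l ((g(k := x)) l) ((h(k := y)) l))"
  shows "F k (g k) (h k) \<le> F k x y"
proof -
  have "(\<Sum>l\<in>UNIV. F l ((g(k := x)) l) ((h(k := y)) l)) = F k x y + (\<Sum>l\<in>UNIV - {k}. F l (g l) (h l))"
    by (subst sum.remove[of UNIV k]) (auto intro!: sum.cong)
  moreover have "(\<Sum>l\<in>UNIV. F l (g l) (h l)) = F k (g k) (h k) + (\<Sum>l\<in>UNIV - {k}. F l (g l) (h l))"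
    by (subst sum.remove[of UNIV k]) auto
  ultimately show ?thesis using assms by simp
qed

lemma lagrangian_term_min_if_multipliers:
  fixes lam g lh :: "'n::finite \<Rightarrow> real"
  assumes lagrange: "\<forall>g' lh'. box_ok lam g' lh' \<longrightarrow>
       rate_obj lam g \<le> rate_obj lam g' + n1 * (totD lam g' lh' - D) + n2 * (totP lam lh' - P)"
    and slack: "n1 * (totD lam g lh - D) = 0" "n2 * (totP lam lh - P) = 0"
    and "box_ok lam g lh" "0 < x" "x \<le> lam k" "0 \<le> y"
  shows "lagrangian_term (lam k) n1 n2 (g k) (lh k) \<le> lagrangian_term (lam k) n1 n2 x y"
proof (rule sum_le_sum_fun_upd_imp[where F = "\<lambda>l. lagrangian_term (lam l) n1 n2" and g = g and h = lh])
  have "box_ok lam (g(k := x)) (lh(k := y))" using assms(4-7) unfolding box_ok_def by auto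
  then show "(\<Sum>l\<in>UNIV. lagrangian_term (lam l) n1 n2 (g l) (lh l))
      \<le> (\<Sum>l\<in>UNIV. lagrangian_term (lam l) n1 n2 ((g(k := x)) l) ((lh(k := y)) l))"
    using lagrange slack rate_obj_plus_penalties_eq[of lam g n1 lh D n2 P]
      rate_obj_plus_penalties_eq[of lam "g(k := x)" n1 "lh(k := y)" D n2 P] by fastforce
qed

lemma D_multiplier_pos_if_active:
  assumes lagrange: "\<forall>g' lh'. box_ok lam g' lh' \<longrightarrow>
       rate_obj lam g \<le> rate_obj lam g' + n1 * (totD lam g' lh' - D) + n2 * (totP lam lh' - P)"
    and "0 \<le> n1" "0 \<le> n2" "feasible lam D P g lh" "\<not> D_inactive lam D P"
  shows "0 < n1"
proof (rule ccontr)
  assume "\<not> 0 < n1"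
  then have "n1 = 0" using \<open>0 \<le> n1\<close> by simp
  have "rate_obj lam g \<le> rate_obj lam g'" if "feasible_noD lam P g' lh'" for g' lh'
  proof -
    have "box_ok lam g' lh'" using that unfolding feasible_noD_def by simp
    then have "rate_obj lam g \<le> rate_obj lam g' + n1 * (totD lam g' lh' - D) + n2 * (totP lam lh' - P)"
      using lagrange by blast
    then have "rate_obj lam g \<le> rate_obj lam g' + n2 * (totP lam lh' - P)"
      using \<open>n1 = 0\<close> by simp
    moreover have "n2 * (totP lam lh' - P) \<le> 0"
      using \<open>0 \<le> n2\<close> that unfolding feasible_noD_def by (simp add: mult_nonneg_nonpos)
    ultimately show ?thesis by linarith
  qed
  then have "D_inactive lam D P"
    using \<open>feasible lam D P g lh\<close> unfolding D_inactive_def optimal_noD_def feasible_noD_def feasible_def by blast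
  then show False using \<open>\<not> D_inactive lam D P\<close> by blast
qed

lemma P_multiplier_pos_if_active:
  assumes lagrange: "\<forall>g' lh'. box_ok lam g' lh' \<longrightarrow>
       rate_obj lam g \<le> rate_obj lam g' + n1 * (totD lam g' lh' - D) + n2 * (totP lam lh' - P)"
    and "0 \<le> n1" "0 \<le> n2" "feasible lam D P g lh" "\<not> P_inactive lam D P"
  shows "0 < n2"
proof (rule ccontr)
  assume "\<not> 0 < n2"
  then have "n2 = 0" using \<open>0 \<le> n2\<close> by simp
  have "rate_obj lam g \<le> rate_obj lam g'" if "feasible_noP lam D g' lh'" for g' lh'
  proof -
    have "box_ok lam g' lh'" using that unfolding feasible_noP_def by simp
    then have "rate_obj lam g \<le> rate_obj lam g' + n1 * (totD lam g' lh' - D) + n2 * (totP lam lh' - P)"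
      using lagrange by blast
    then have "rate_obj lam g \<le> rate_obj lam g' + n1 * (totD lam g' lh' - D)"
      using \<open>n2 = 0\<close> by simp
    moreover have "n1 * (totD lam g' lh' - D) \<le> 0"
      using \<open>0 \<le> n1\<close> that unfolding feasible_noP_def by (simp add: mult_nonneg_nonpos)
    ultimately show ?thesis by linarith
  qed
  then have "P_inactive lam D P"
    using \<open>feasible lam D P g lh\<close> unfolding P_inactive_def optimal_noP_def feasible_noP_def feasible_def by blast
  then show False using \<open>\<not> P_inactive lam D P\<close> by blast
qed

section \<open>Minimising a single Lagrangian term\<close>

lemma ln_less_minus_one:
  fixes z :: real
  assumes "0 < z" "z \<noteq> 1"
  shows "ln z < z - 1"
proof -
  have "ln z \<le> z - 1" "ln z \<noteq> z - 1" using assms ln_le_minus_one ln_eq_minus_one by auto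
  then show ?thesis by linarith
qed

lemma linear_less_half_ln_ratio:
  fixes n x y :: real
  assumes "0 < x" "x < y" "2 * n * y \<le> 1"
  shows "n * (y - x) < ln (y / x) / 2"
proof -
  have "ln (x / y) < x / y - 1" using assms by (intro ln_less_minus_one) auto
  then have "(y - x) / y < ln (y / x)" using assms by (simp add: ln_div field_simps)
  moreover have "2 * n * (y - x) \<le> (y - x) / y"
    using assms mult_right_mono[OF assms(3), of "y - x"] by (simp add: field_simps)
  ultimately show ?thesis by linarith
qed

lemma half_ln_ratio_less_linear:
  fixes n x y :: real
  assumes "0 < x" "x < y" "1 \<le> 2 * n * x"
  shows "ln (y / x) / 2 < n * (y - x)"
proof -
  have "ln (y / x) < y / x - 1" using assms by (intro ln_less_minus_one) auto
  then have "ln (y / x) < (y - x) / x" using assms by (simp add: field_simps)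
  moreover have "(y - x) / x \<le> 2 * n * (y - x)"
    using assms mult_right_mono[OF assms(3), of "y - x"] by (simp add: field_simps)
  ultimately show ?thesis by linarith
qed

lemma lagrangian_term_complement_diff:
  assumes "0 < x" "0 < y" "x \<le> lam" "y \<le> lam"
  shows "lagrangian_term lam n1 0 y (lam - y) - lagrangian_term lam n1 0 x (lam - x)
           = n1 * (y - x) - ln (y / x) / 2"
  using assms by (simp add: lagrangian_term_def Dl_complement ln_div field_simps)

lemma lagrangian_term_min_water_filling:
  assumes "0 < n1" "0 < g" "g \<le> lam" "0 \<le> lh"
    and min: "\<And>x y. 0 < x \<Longrightarrow> x \<le> lam \<Longrightarrow> 0 \<le> y \<Longrightarrow>
                lagrangian_term lam n1 0 g lh \<le> lagrangian_term lam n1 0 x y"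
  shows "lh = lam - g \<and> g = min (1 / (2 * n1)) lam"
proof
  have "lagrangian_term lam n1 0 g lh \<le> lagrangian_term lam n1 0 g (lam - g)"
    using min assms by simp
  then have "Dl lam g lh \<le> g"
    using \<open>0 < n1\<close> \<open>g \<le> lam\<close> by (simp add: lagrangian_term_def Dl_complement)
  then have "(sqrt lh - sqrt (lam - g))\<^sup>2 = 0"
    using Dl_eq_square[OF \<open>0 \<le> lh\<close> \<open>g \<le> lam\<close>] by (simp add: add_le_same_cancel1)
  then show lh: "lh = lam - g" using assms by simp
  define c where "c = 1 / (2 * n1)"
  have "0 < c" using \<open>0 < n1\<close> unfolding c_def by simp
  have Fmin: "0 \<le> lagrangian_term lam n1 0 x (lam - x) - lagrangian_term lam n1 0 g (lam - g)"
    if "0 < x" "x \<le> lam" for x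
    using min[OF that, of "lam - x"] that lh by simp
  have "g \<le> c"
  proof (rule ccontr)
    assume "\<not> g \<le> c"
    then have "ln (g / c) / 2 < n1 * (g - c)"
      using \<open>0 < n1\<close> by (intro half_ln_ratio_less_linear) (auto simp: c_def)
    moreover have "c \<le> lam" using \<open>\<not> g \<le> c\<close> \<open>g \<le> lam\<close> by simp
    ultimately show False
      using Fmin[of c] lagrangian_term_complement_diff[of c g lam n1] \<open>0 < c\<close> \<open>0 < g\<close> \<open>g \<le> lam\<close>
      by linarith
  qed
  moreover have "min c lam \<le> g"
  proof (rule ccontr)
    assume "\<not> min c lam \<le> g"
    then have "n1 * (min c lam - g) < ln (min c lam / g) / 2"
      using \<open>0 < g\<close> \<open>0 < n1\<close> by (intro linear_less_half_ln_ratio) (auto simp: c_def min_def field_simps)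
    moreover have "0 < min c lam" "min c lam \<le> lam" using \<open>0 < c\<close> \<open>0 < g\<close> \<open>g \<le> lam\<close> by auto
    ultimately show False
      using Fmin[of "min c lam"] lagrangian_term_complement_diff[of g "min c lam" lam n1]
        \<open>0 < g\<close> \<open>g \<le> lam\<close> by linarith
  qed
  ultimately show "g = min (1 / (2 * n1)) lam" using \<open>g \<le> lam\<close> unfolding c_def by linarith
qed

lemma theta_eq_imp_pos:
  assumes "0 < n1" "0 < n2" "0 < lam" and te: "theta_eq n1 n2 lam t"
  shows "0 < t" "0 < 1 + (1 - t) * n1 / n2"
proof -
  have "1 + (1 - t) * n1 / n2 \<noteq> 0" and "t \<le> 2 * n1 * lam"
    and eq: "t / (1 + (1 - t) * n1 / n2) = sqrt (1 - t / (2 * n1 * lam))"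
    using te unfolding theta_eq_def by auto
  show "0 < t"
  proof (rule ccontr)
    assume "\<not> 0 < t"
    then have "0 < 1 + (1 - t) * n1 / n2" using assms by (simp add: add_pos_nonneg)
    then have "t / (1 + (1 - t) * n1 / n2) \<le> 0" using \<open>\<not> 0 < t\<close> by (simp add: divide_nonpos_pos)
    moreover have "1 \<le> sqrt (1 - t / (2 * n1 * lam))"
      using \<open>\<not> 0 < t\<close> assms by (simp add: divide_nonpos_pos)
    ultimately show False using eq by simp
  qed
  show "0 < 1 + (1 - t) * n1 / n2"
  proof (rule ccontr)
    assume "\<not> 0 < 1 + (1 - t) * n1 / n2"
    then have "t / (1 + (1 - t) * n1 / n2) < 0"
      using \<open>0 < t\<close> \<open>1 + (1 - t) * n1 / n2 \<noteq> 0\<close> by (simp add: divide_pos_neg)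
    moreover have "0 \<le> sqrt (1 - t / (2 * n1 * lam))" using \<open>t \<le> 2 * n1 * lam\<close> assms by simp
    ultimately show False using eq by simp
  qed
qed

lemma theta_eq_unique:
  assumes "0 < n1" "0 < n2" "0 < lam" "theta_eq n1 n2 lam t1" "theta_eq n1 n2 lam t2"
  shows "t1 = t2"
proof -
  have False if te: "theta_eq n1 n2 lam s1" "theta_eq n1 n2 lam s2" and "s1 < s2" for s1 s2
  proof -
    define d1 d2 where "d1 = 1 + (1 - s1) * n1 / n2" and "d2 = 1 + (1 - s2) * n1 / n2"
    have "0 < d1" "0 < d2" unfolding d1_def d2_def using theta_eq_imp_pos[OF assms(1-3)] te by auto
    have "s2 * d1 - s1 * d2 = (s2 - s1) * (1 + n1 / n2)"
      unfolding d1_def d2_def using assms by (simp add: field_simps)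
    also have "\<dots> > 0" using \<open>s1 < s2\<close> assms by (simp add: add_pos_pos)
    finally have "s1 / d1 < s2 / d2" using \<open>0 < d1\<close> \<open>0 < d2\<close> by (simp add: field_simps)
    moreover have "sqrt (1 - s2 / (2 * n1 * lam)) \<le> sqrt (1 - s1 / (2 * n1 * lam))"
      using \<open>s1 < s2\<close> assms by (simp add: divide_right_mono)
    ultimately show False using te unfolding theta_eq_def d1_def d2_def by simp
  qed
  then show ?thesis using assms(4,5) by (metis linorder_neqE_linordered_idom)
qed

text \<open>For x = lam - b^2 and y = a^2 the Lagrangian term is a quadratic in a, minimised at
  a = best_sqrt_lh lam n1 n2 b with minimum value reduced_lagrangian lam n1 n2 b.\<close>

definition best_sqrt_lh :: "real \<Rightarrow> real \<Rightarrow> real \<Rightarrow> real \<Rightarrow> real" where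
  "best_sqrt_lh lam n1 n2 b = (n1 * b + n2 * sqrt lam) / (n1 + n2)"

definition reduced_lagrangian :: "real \<Rightarrow> real \<Rightarrow> real \<Rightarrow> real \<Rightarrow> real" where
  "reduced_lagrangian lam n1 n2 b =
     (ln lam - ln (lam - b\<^sup>2)) / 2 + (n1 + n2) * lam - (n1 * b + n2 * sqrt lam)\<^sup>2 / (n1 + n2)"

lemma lagrangian_term_complete_square:
  assumes "b\<^sup>2 < lam" "0 < n1 + n2" "0 \<le> a" "0 \<le> b"
  shows "lagrangian_term lam n1 n2 (lam - b\<^sup>2) (a\<^sup>2)
           = reduced_lagrangian lam n1 n2 b + (n1 + n2) * (a - best_sqrt_lh lam n1 n2 b)\<^sup>2"
proof -
  define m where "m = n1 * b + n2 * sqrt lam"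
  have square: "c * (a - m / c)\<^sup>2 = c * a\<^sup>2 - 2 * a * m + m\<^sup>2 / c" if "c \<noteq> 0" for c
    using that by (simp add: field_simps power2_eq_square)
  have Dl_eq: "Dl lam (lam - b\<^sup>2) (a\<^sup>2) = lam - 2 * a * b + a\<^sup>2"
    using assms by (simp add: Dl_def real_sqrt_mult)
  have "0 < lam" using assms(1) by (auto intro: le_less_trans[OF zero_le_power2])
  then have Pl_eq: "Pl lam (a\<^sup>2) = lam - 2 * a * sqrt lam + a\<^sup>2"
    using assms by (simp add: Pl_def power2_diff)
  have square_eq: "(n1 + n2) * (a - best_sqrt_lh lam n1 n2 b)\<^sup>2 = (n1 + n2) * a\<^sup>2 - 2 * a * m + m\<^sup>2 / (n1 + n2)"
    unfolding best_sqrt_lh_def m_def[symmetric] using assms by (intro square) simp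
  have "ln (lam / (lam - b\<^sup>2)) = ln lam - ln (lam - b\<^sup>2)"
    using assms(1) \<open>0 < lam\<close> by (simp add: ln_div)
  then show ?thesis
    unfolding lagrangian_term_def reduced_lagrangian_def m_def[symmetric] Dl_eq Pl_eq square_eq
    by (simp add: m_def algebra_simps)
qed

lemma reduced_lagrangian_deriv:
  assumes "0 < n1 + n2" "b\<^sup>2 < lam"
  shows "(reduced_lagrangian lam n1 n2 has_real_derivative
           b / (lam - b\<^sup>2) - 2 * n1 * best_sqrt_lh lam n1 n2 b) (at b)"
proof -
  have "0 < lam - b\<^sup>2" using assms(2) by simp
  have rearrange: "(0 - - (2 * b) / L) / 2 + 0 - 2 * m * n1 / N = b / L - 2 * n1 * (m / N)" for L m N :: real
    by simp
  have "((\<lambda>b. lam - b\<^sup>2) has_real_derivative - (2 * b)) (at b)"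
    by (auto intro!: derivative_eq_intros)
  from DERIV_chain2[OF DERIV_ln_divide[OF \<open>0 < lam - b\<^sup>2\<close>] this]
  have "((\<lambda>b. ln (lam - b\<^sup>2)) has_real_derivative - (2 * b) / (lam - b\<^sup>2)) (at b)" by simp
  moreover have "((\<lambda>b. (n1 * b + n2 * sqrt lam)\<^sup>2) has_real_derivative 2 * (n1 * b + n2 * sqrt lam) * n1) (at b)"
    by (auto intro!: derivative_eq_intros)
  ultimately have "(reduced_lagrangian lam n1 n2 has_real_derivative
      (0 - - (2 * b) / (lam - b\<^sup>2)) / 2 + 0 - 2 * (n1 * b + n2 * sqrt lam) * n1 / (n1 + n2)) (at b)"
    unfolding reduced_lagrangian_def[abs_def]
    by (intro DERIV_diff DERIV_add DERIV_cdivide DERIV_const)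
  moreover have "(0 - - (2 * b) / (lam - b\<^sup>2)) / 2 + 0 - 2 * (n1 * b + n2 * sqrt lam) * n1 / (n1 + n2)
      = b / (lam - b\<^sup>2) - 2 * n1 * best_sqrt_lh lam n1 n2 b"
    using rearrange unfolding best_sqrt_lh_def by blast
  ultimately show ?thesis by simp
qed

lemma reduced_lagrangian_min_imp_stationary:
  assumes "0 < n1" "0 < n2" "0 \<le> \<beta>" "\<beta>\<^sup>2 < lam"
    and min: "\<And>b. 0 \<le> b \<Longrightarrow> b\<^sup>2 < lam \<Longrightarrow> reduced_lagrangian lam n1 n2 \<beta> \<le> reduced_lagrangian lam n1 n2 b"
  shows "0 < \<beta>" and "\<beta> / (lam - \<beta>\<^sup>2) = 2 * n1 * best_sqrt_lh lam n1 n2 \<beta>"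
proof -
  have "0 < lam" using assms(4) by (auto intro: le_less_trans[OF zero_le_power2])
  have below_sqrt: "x\<^sup>2 < lam" if "0 \<le> x" "x < sqrt lam" for x
    using that real_sqrt_less_iff[of "x\<^sup>2" lam] by simp
  have deriv: "(reduced_lagrangian lam n1 n2 has_real_derivative
      b / (lam - b\<^sup>2) - 2 * n1 * best_sqrt_lh lam n1 n2 b) (at b)" if "b\<^sup>2 < lam" for b
    using reduced_lagrangian_deriv[OF _ that] assms(1,2) by simp
  show "0 < \<beta>"
  proof (rule ccontr)
    assume "\<not> 0 < \<beta>"
    then have "\<beta> = 0" using \<open>0 \<le> \<beta>\<close> by simp
    have "0 / (lam - 0\<^sup>2) - 2 * n1 * best_sqrt_lh lam n1 n2 0 < 0"
      unfolding best_sqrt_lh_def using assms(1,2) \<open>0 < lam\<close> by simp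
    then obtain d where "0 < d" and decr: "\<And>h. 0 < h \<Longrightarrow> h < d \<Longrightarrow>
        reduced_lagrangian lam n1 n2 (0 + h) < reduced_lagrangian lam n1 n2 0"
      using DERIV_neg_dec_right[OF deriv[of 0]] \<open>0 < lam\<close> by auto
    define h where "h = min d (sqrt lam) / 2"
    have "0 < min d (sqrt lam)" "min d (sqrt lam) \<le> d" "min d (sqrt lam) \<le> sqrt lam"
      using \<open>0 < d\<close> \<open>0 < lam\<close> by auto
    then have "0 < h" "h < d" "h < sqrt lam" unfolding h_def by linarith+
    then have "h\<^sup>2 < lam" by (simp add: below_sqrt)
    then show False using decr[OF \<open>0 < h\<close> \<open>h < d\<close>] min[of h] \<open>0 < h\<close> \<open>\<beta> = 0\<close> by simp
  qed
  show "\<beta> / (lam - \<beta>\<^sup>2) = 2 * n1 * best_sqrt_lh lam n1 n2 \<beta>"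
  proof -
    have "\<beta> < sqrt lam" using assms(4) \<open>0 \<le> \<beta>\<close> by (simp add: real_less_rsqrt)
    have local_min: "\<forall>y. \<bar>\<beta> - y\<bar> < min \<beta> (sqrt lam - \<beta>) \<longrightarrow>
        reduced_lagrangian lam n1 n2 \<beta> \<le> reduced_lagrangian lam n1 n2 y"
    proof (intro allI impI)
      fix y assume "\<bar>\<beta> - y\<bar> < min \<beta> (sqrt lam - \<beta>)"
      then show "reduced_lagrangian lam n1 n2 \<beta> \<le> reduced_lagrangian lam n1 n2 y"
        by (intro min below_sqrt) auto
    qed
    have "0 < min \<beta> (sqrt lam - \<beta>)" using \<open>0 < \<beta>\<close> \<open>\<beta> < sqrt lam\<close> by simp
    from DERIV_local_min[OF deriv[OF assms(4)] this local_min]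
    show ?thesis by simp
  qed
qed

lemma theta_eq_if_stationary:
  assumes "0 < n1" "0 < n2" "0 < \<beta>" "\<beta>\<^sup>2 < lam"
    and stationary: "\<beta> / (lam - \<beta>\<^sup>2) = 2 * n1 * best_sqrt_lh lam n1 n2 \<beta>"
  defines "\<theta> \<equiv> 2 * n1 * (lam - \<beta>\<^sup>2)"
  shows "theta_eq n1 n2 lam \<theta>" and "(best_sqrt_lh lam n1 n2 \<beta>)\<^sup>2 = lam / (1 + (1 - \<theta>) * n1 / n2)\<^sup>2"
proof -
  define s \<alpha> den where "s = sqrt lam" and "\<alpha> = best_sqrt_lh lam n1 n2 \<beta>"
    and "den = 1 + (1 - \<theta>) * n1 / n2"
  have "0 < lam" using assms(4) by (auto intro: le_less_trans[OF zero_le_power2])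
  then have "0 < s" "s\<^sup>2 = lam" unfolding s_def by simp_all
  have "0 < \<theta>" unfolding \<theta>_def using assms(1,4) by simp
  have \<beta>_eq: "\<beta> = \<theta> * \<alpha>"
    using stationary assms(4) unfolding \<theta>_def \<alpha>_def by (simp add: field_simps)
  have \<alpha>_eq: "\<alpha> * (n1 + n2) = n1 * \<beta> + n2 * s"
    using assms(1,2) unfolding \<alpha>_def s_def best_sqrt_lh_def by (simp add: field_simps)
  have "\<beta> * den * n2 = \<theta> * (\<alpha> * (n1 + n2)) - \<theta> * n1 * \<beta>"
    unfolding den_def using assms(2) \<beta>_eq by (simp add: field_simps)
  also have "\<dots> = \<theta> * s * n2" unfolding \<alpha>_eq by (simp add: algebra_simps)
  finally have \<beta>_den: "\<beta> * den = \<theta> * s" using assms(2) by simp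
  then have "0 < \<beta> * den" using \<open>0 < \<theta>\<close> \<open>0 < s\<close> by simp
  then have "0 < den" using \<open>0 < \<beta>\<close> by (simp add: zero_less_mult_iff)
  have "\<theta> / den = \<beta> / s" using \<beta>_den \<open>0 < den\<close> \<open>0 < s\<close> by (simp add: field_simps)
  also have "\<beta> / s = sqrt (\<beta>\<^sup>2 / lam)" using \<open>0 < \<beta>\<close> unfolding s_def by (simp add: real_sqrt_divide)
  also have "\<beta>\<^sup>2 / lam = 1 - \<theta> / (2 * n1 * lam)"
    unfolding \<theta>_def using assms(1) \<open>0 < lam\<close> by (simp add: field_simps)
  finally have "\<theta> / den = sqrt (1 - \<theta> / (2 * n1 * lam))" .
  moreover have "\<theta> \<le> 2 * n1 * lam" unfolding \<theta>_def using assms(1) by simp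
  ultimately show "theta_eq n1 n2 lam \<theta>"
    unfolding theta_eq_def den_def[symmetric] using \<open>0 < den\<close> by simp
  have "\<alpha> = s / den" using \<beta>_eq \<beta>_den \<open>0 < \<theta>\<close> \<open>0 < den\<close> by (simp add: field_simps)
  then show "(best_sqrt_lh lam n1 n2 \<beta>)\<^sup>2 = lam / (1 + (1 - \<theta>) * n1 / n2)\<^sup>2"
    using \<open>s\<^sup>2 = lam\<close> unfolding \<alpha>_def den_def by (simp add: power_divide)
qed

lemma lagrangian_term_min_theta:
  assumes "0 < n1" "0 < n2" "0 < g" "g \<le> lam" "0 \<le> lh"
    and min: "\<And>x y. 0 < x \<Longrightarrow> x \<le> lam \<Longrightarrow> 0 \<le> y \<Longrightarrow>
                lagrangian_term lam n1 n2 g lh \<le> lagrangian_term lam n1 n2 x y"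
  shows "g < lam \<and> theta_eq n1 n2 lam (2 * n1 * g) \<and> lh = lam / (1 + (1 - 2 * n1 * g) * n1 / n2)\<^sup>2"
proof -
  define \<beta> \<alpha> where "\<beta> = sqrt (lam - g)" and "\<alpha> = sqrt lh"
  have "0 \<le> \<beta>" "0 \<le> \<alpha>" "g = lam - \<beta>\<^sup>2" "lh = \<alpha>\<^sup>2" "\<beta>\<^sup>2 < lam"
    unfolding \<beta>_def \<alpha>_def using assms(3-5) by simp_all
  have A_nonneg: "0 \<le> best_sqrt_lh lam n1 n2 b" if "0 \<le> b" for b
    unfolding best_sqrt_lh_def using that assms(1-4) by simp
  have square: "lagrangian_term lam n1 n2 (lam - b\<^sup>2) (a\<^sup>2)
      = reduced_lagrangian lam n1 n2 b + (n1 + n2) * (a - best_sqrt_lh lam n1 n2 b)\<^sup>2"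
    if "0 \<le> a" "0 \<le> b" "b\<^sup>2 < lam" for a b
    using lagrangian_term_complete_square that assms(1,2) by simp
  have "lagrangian_term lam n1 n2 g lh \<le> lagrangian_term lam n1 n2 g ((best_sqrt_lh lam n1 n2 \<beta>)\<^sup>2)"
    using min assms(3,4) by simp
  then have "(n1 + n2) * (\<alpha> - best_sqrt_lh lam n1 n2 \<beta>)\<^sup>2 \<le> 0"
    unfolding \<open>g = lam - \<beta>\<^sup>2\<close> \<open>lh = \<alpha>\<^sup>2\<close>
    using square[OF \<open>0 \<le> \<alpha>\<close> \<open>0 \<le> \<beta>\<close> \<open>\<beta>\<^sup>2 < lam\<close>]
      square[OF A_nonneg[OF \<open>0 \<le> \<beta>\<close>] \<open>0 \<le> \<beta>\<close> \<open>\<beta>\<^sup>2 < lam\<close>] by simp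
  then have \<alpha>_opt: "\<alpha> = best_sqrt_lh lam n1 n2 \<beta>"
    using assms(1,2) by (simp add: mult_le_0_iff)
  have "reduced_lagrangian lam n1 n2 \<beta> \<le> reduced_lagrangian lam n1 n2 b"
    if "0 \<le> b" "b\<^sup>2 < lam" for b
  proof -
    have "reduced_lagrangian lam n1 n2 \<beta> = lagrangian_term lam n1 n2 g lh"
      unfolding \<open>g = lam - \<beta>\<^sup>2\<close> \<open>lh = \<alpha>\<^sup>2\<close>
      using square[OF \<open>0 \<le> \<alpha>\<close> \<open>0 \<le> \<beta>\<close> \<open>\<beta>\<^sup>2 < lam\<close>] \<alpha>_opt by simp
    also have "\<dots> \<le> lagrangian_term lam n1 n2 (lam - b\<^sup>2) ((best_sqrt_lh lam n1 n2 b)\<^sup>2)"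
      using that by (intro min) simp_all
    also have "\<dots> = reduced_lagrangian lam n1 n2 b"
      using square[OF A_nonneg[OF that(1)] that] by simp
    finally show ?thesis .
  qed
  from reduced_lagrangian_min_imp_stationary[OF assms(1,2) \<open>0 \<le> \<beta>\<close> \<open>\<beta>\<^sup>2 < lam\<close> this]
  have "0 < \<beta>" and "\<beta> / (lam - \<beta>\<^sup>2) = 2 * n1 * best_sqrt_lh lam n1 n2 \<beta>" by auto
  from theta_eq_if_stationary[OF assms(1,2) this(1) \<open>\<beta>\<^sup>2 < lam\<close> this(2)]
  show ?thesis
    using \<open>0 < \<beta>\<close> \<alpha>_opt unfolding \<open>g = lam - \<beta>\<^sup>2\<close> \<open>lh = \<alpha>\<^sup>2\<close> by simp
qed

section \<open>The three regimes\<close>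

lemma optimal_both_active:
  fixes lam g lh :: "'n::finite \<Rightarrow> real"
  assumes lam: "\<forall>l. 0 < lam l" and sf: "strictly_feasible lam D P" and opt: "optimal lam D P g lh"
    and "\<not> D_inactive lam D P" and "\<not> P_inactive lam D P"
  shows "(\<exists>nu1 nu2. 0 < nu1 \<and> 0 < nu2 \<and>
          (\<exists>\<theta>::'n \<Rightarrow> real. \<forall>l.
             theta_eq nu1 nu2 (lam l) (\<theta> l) \<and>
             (\<forall>t. theta_eq nu1 nu2 (lam l) t \<longrightarrow> t = \<theta> l) \<and>
             g l = \<theta> l / (2 * nu1) \<and>
             lh l = lam l / (1 + (1 - \<theta> l) * nu1 / nu2)\<^sup>2) \<and>
          totD lam g lh = D \<and> totP lam lh = P) \<and>
       (\<forall>l. g l < lam l)"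
proof -
  obtain n1 n2 where "0 \<le> n1" "0 \<le> n2"
    and slack: "n1 * (totD lam g lh - D) = 0" "n2 * (totP lam lh - P) = 0"
    and lagrange: "\<forall>g' lh'. box_ok lam g' lh' \<longrightarrow>
       rate_obj lam g \<le> rate_obj lam g' + n1 * (totD lam g' lh' - D) + n2 * (totP lam lh' - P)"
    using optimal_imp_multipliers[OF lam sf opt] by blast
  have fe: "feasible lam D P g lh" using opt unfolding optimal_def by blast
  then have box: "box_ok lam g lh" unfolding feasible_def by blast
  have "0 < n1" using D_multiplier_pos_if_active[OF lagrange \<open>0 \<le> n1\<close> \<open>0 \<le> n2\<close> fe] assms(4) .
  have "0 < n2" using P_multiplier_pos_if_active[OF lagrange \<open>0 \<le> n1\<close> \<open>0 \<le> n2\<close> fe] assms(5) .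
  have component: "g l < lam l \<and> theta_eq n1 n2 (lam l) (2 * n1 * g l) \<and>
      lh l = lam l / (1 + (1 - 2 * n1 * g l) * n1 / n2)\<^sup>2" for l
  proof (rule lagrangian_term_min_theta[OF \<open>0 < n1\<close> \<open>0 < n2\<close>])
    show "0 < g l" "g l \<le> lam l" "0 \<le> lh l" using box unfolding box_ok_def by auto
    show "lagrangian_term (lam l) n1 n2 (g l) (lh l) \<le> lagrangian_term (lam l) n1 n2 x y"
      if "0 < x" "x \<le> lam l" "0 \<le> y" for x y
      by (rule lagrangian_term_min_if_multipliers[OF lagrange slack box that])
  qed
  have "theta_eq n1 n2 (lam l) t \<Longrightarrow> t = 2 * n1 * g l" for l t
    using theta_eq_unique[OF \<open>0 < n1\<close> \<open>0 < n2\<close>] component lam by blast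
  moreover have "totD lam g lh = D" "totP lam lh = P" using slack \<open>0 < n1\<close> \<open>0 < n2\<close> by simp_all
  ultimately show ?thesis
    using \<open>0 < n1\<close> \<open>0 < n2\<close> component by (intro conjI exI[of _ n1] exI[of _ n2] exI[of _ "\<lambda>l. 2 * n1 * g l"]) auto
qed

lemma optimal_D_active_P_inactive:
  fixes lam g lh :: "'n::finite \<Rightarrow> real"
  assumes lam: "\<forall>l. 0 < lam l" and sf: "strictly_feasible lam D P" and opt: "optimal lam D P g lh"
    and "\<not> D_inactive lam D P" and "P_inactive lam D P"
  shows "\<exists>nu1. 0 < nu1 \<and>
          (\<Sum>l\<in>UNIV. pos_part (lam l - 1 / (2 * nu1))) = pos_part ((\<Sum>l\<in>UNIV. lam l) - D) \<and>
          (\<forall>l. g l = min (1 / (2 * nu1)) (lam l) \<and> lh l = lam l - min (1 / (2 * nu1)) (lam l))"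
proof -
  have fe: "feasible lam D P g lh" using opt unfolding optimal_def by blast
  then have box: "box_ok lam g lh" and "totD lam g lh \<le> D" unfolding feasible_def by auto
  obtain g0 lh0 where opt0: "optimal_noP lam D g0 lh0" and "feasible lam D P g0 lh0"
    using \<open>P_inactive lam D P\<close> unfolding P_inactive_def by blast
  have "optimal_noP lam D g lh"
    using opt opt0 \<open>feasible lam D P g0 lh0\<close> fe
    unfolding optimal_def optimal_noP_def feasible_def feasible_noP_def by (meson order_trans)
  then obtain n1 where "0 \<le> n1" and slack: "n1 * (totD lam g lh - D) = 0"
    and "\<forall>g' lh'. box_ok lam g' lh' \<longrightarrow> rate_obj lam g \<le> rate_obj lam g' + n1 * (totD lam g' lh' - D)"
    using optimal_noP_imp_multiplier[OF lam sf] by blast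
  then have lagrange: "\<forall>g' lh'. box_ok lam g' lh' \<longrightarrow>
      rate_obj lam g \<le> rate_obj lam g' + n1 * (totD lam g' lh' - D) + 0 * (totP lam lh' - P)"
    by simp
  have "0 < n1" using D_multiplier_pos_if_active[OF lagrange \<open>0 \<le> n1\<close> order_refl fe] assms(4) .
  have component: "lh l = lam l - g l \<and> g l = min (1 / (2 * n1)) (lam l)" for l
  proof (rule lagrangian_term_min_water_filling[OF \<open>0 < n1\<close>])
    show "0 < g l" "g l \<le> lam l" "0 \<le> lh l" using box unfolding box_ok_def by auto
    show "lagrangian_term (lam l) n1 0 (g l) (lh l) \<le> lagrangian_term (lam l) n1 0 x y"
      if "0 < x" "x \<le> lam l" "0 \<le> y" for x y
      using lagrangian_term_min_if_multipliers[OF lagrange slack _ box that] by simp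
  qed
  have "totD lam g lh = D" using slack \<open>0 < n1\<close> by simp
  moreover have "totD lam g lh = (\<Sum>l\<in>UNIV. g l)"
    unfolding totD_def using component box Dl_complement unfolding box_ok_def by metis
  moreover have "pos_part (lam l - 1 / (2 * n1)) = lam l - g l" for l
    using component[of l] unfolding pos_part_def by (auto simp: min_def max_def)
  ultimately have "(\<Sum>l\<in>UNIV. pos_part (lam l - 1 / (2 * n1))) = (\<Sum>l\<in>UNIV. lam l) - D"
    by (simp add: sum_subtractf)
  moreover have "D \<le> (\<Sum>l\<in>UNIV. lam l)"
    using \<open>totD lam g lh = D\<close> \<open>totD lam g lh = (\<Sum>l\<in>UNIV. g l)\<close> box
    unfolding box_ok_def by (metis sum_mono)
  ultimately show ?thesis
    using \<open>0 < n1\<close> component unfolding pos_part_def by auto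
qed

lemma optimal_D_inactive:
  fixes lam g lh :: "'n::finite \<Rightarrow> real"
  assumes lam: "\<forall>l. 0 < lam l" and "strictly_feasible lam D P" and opt: "optimal lam D P g lh"
    and "D_inactive lam D P"
  shows "(\<forall>l. g l = lam l) \<and>
       lh \<in> {x. totP lam x \<le> P \<and> (\<Sum>l\<in>UNIV. lam l + x l) \<le> D \<and> (\<forall>l. 0 \<le> x l)} \<and>
       (\<forall>x\<in>{x. totP lam x \<le> P \<and> (\<Sum>l\<in>UNIV. lam l + x l) \<le> D \<and> (\<forall>l. 0 \<le> x l)}.
          optimal lam D P lam x)"
proof -
  obtain g0 lh0 where opt0: "optimal_noD lam P g0 lh0" and "feasible lam D P g0 lh0"
    using \<open>D_inactive lam D P\<close> unfolding D_inactive_def by blast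
  obtain gs lhs where "totP lam lhs < P"
    using \<open>strictly_feasible lam D P\<close> unfolding strictly_feasible_def by blast
  then have "0 \<le> P" using totP_nonneg[of lam lhs] by linarith
  have box_self: "box_ok lam lam x" if "\<forall>l. 0 \<le> x l" for x
    using lam that unfolding box_ok_def by (auto intro: less_imp_le)
  have "totP lam lam = 0" unfolding totP_def Pl_def by simp
  then have "feasible_noD lam P lam lam"
    unfolding feasible_noD_def using box_self lam \<open>0 \<le> P\<close> by (auto intro: less_imp_le)
  then have "rate_obj lam g0 \<le> 0" using opt0 rate_obj_self[of lam] unfolding optimal_noD_def by metis
  moreover have "rate_obj lam g \<le> rate_obj lam g0"
    using opt \<open>feasible lam D P g0 lh0\<close> unfolding optimal_def by blast
  moreover have box: "box_ok lam g lh" using opt unfolding optimal_def feasible_def by blast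
  ultimately have "rate_obj lam g = 0" using rate_obj_nonneg[OF box] by linarith
  then have "g = lam" using rate_obj_eq_0_imp_eq[OF lam box] by blast
  moreover have "lh \<in> {x. totP lam x \<le> P \<and> (\<Sum>l\<in>UNIV. lam l + x l) \<le> D \<and> (\<forall>l. 0 \<le> x l)}"
    using opt box \<open>g = lam\<close> unfolding optimal_def feasible_def box_ok_def by (auto simp: totD_self)
  moreover have "optimal lam D P lam x"
    if "x \<in> {x. totP lam x \<le> P \<and> (\<Sum>l\<in>UNIV. lam l + x l) \<le> D \<and> (\<forall>l. 0 \<le> x l)}" for x
    using that box_self rate_obj_nonneg
    unfolding optimal_def feasible_def totD_self rate_obj_self by auto
  ultimately show ?thesis by blast
qed

theorem theorem6:
  fixes lam :: "'n::finite \<Rightarrow> real" and D P :: real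
    and g lh :: "'n \<Rightarrow> real"
  assumes lam_pos: "\<forall>l. 0 < lam l"
    and sf: "strictly_feasible lam D P"
    and opt: "optimal lam D P g lh"
  shows
    "(\<not> D_inactive lam D P \<and> \<not> P_inactive lam D P \<longrightarrow>
       (\<exists>nu1 nu2. 0 < nu1 \<and> 0 < nu2 \<and>
          (\<exists>\<theta>::'n \<Rightarrow> real. \<forall>l.
             theta_eq nu1 nu2 (lam l) (\<theta> l) \<and>
             (\<forall>t. theta_eq nu1 nu2 (lam l) t \<longrightarrow> t = \<theta> l) \<and>
             g l = \<theta> l / (2 * nu1) \<and>
             lh l = lam l / (1 + (1 - \<theta> l) * nu1 / nu2)\<^sup>2) \<and>
          totD lam g lh = D \<and> totP lam lh = P) \<and>
       (\<forall>l. g l < lam l))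
   \<and> (\<not> D_inactive lam D P \<and> P_inactive lam D P \<longrightarrow>
       (\<exists>nu1. 0 < nu1 \<and>
          (\<Sum>l\<in>UNIV. pos_part (lam l - 1 / (2 * nu1))) = pos_part ((\<Sum>l\<in>UNIV. lam l) - D) \<and>
          (\<forall>l. g l = min (1 / (2 * nu1)) (lam l) \<and>
               lh l = lam l - min (1 / (2 * nu1)) (lam l))))
   \<and> (D_inactive lam D P \<longrightarrow>
       (\<forall>l. g l = lam l) \<and>
       lh \<in> {x. totP lam x \<le> P \<and> (\<Sum>l\<in>UNIV. lam l + x l) \<le> D \<and> (\<forall>l. 0 \<le> x l)} \<and>
       (\<forall>x\<in>{x. totP lam x \<le> P \<and> (\<Sum>l\<in>UNIV. lam l + x l) \<le> D \<and> (\<forall>l. 0 \<le> x l)}.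
          optimal lam D P lam x))"
  using optimal_both_active[OF lam_pos sf opt] optimal_D_active_P_inactive[OF lam_pos sf opt]
    optimal_D_inactive[OF lam_pos sf opt]
  by blast

end
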